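(* Let $\alpha>0$, $\sigma>0$, and let $\partial^-$ be the linear operator on $\mathbb C[z]$ defined by $\partial^-c_n=nc_{n-1}$ ($n\in\mathbb N_0$, with $c_{-1}:=0$). Then $\partial^-$, regarded as a densely defined operator in $L^2(\alpha\mathbb N_0,\pi_{\alpha,\sigma})$, is closable. Denoting its closure again by $\partial^-$, for each $z\in\mathbb C$ the coherent state $\mathcal E(\cdot,z)$ belongs to the domain of $\sigma\partial^-$ and is an eigenfunction of $\sigma\partial^-$ with eigenvalue $z$ (equivalently, an eigenfunction of $\partial^-$ with eigenvalue $z/\sigma$).
   Context: Let $\pi_{\alpha,\sigma}=\exp(-\sigma/\alpha^2)\sum_{n\ge0}\frac{1}{n!}(\sigma/\alpha^2)^n\delta_{\alpha n}$ on $\alpha\mathbb N_0$ ($\delta_y$ the Dirac measure at $y$), and let $(c_n)_{n\ge0}$ be the monic polynomial sequence orthogonal with respect to $\pi_{\alpha,\sigma}$, with generating function $\sum_{n\ge0}\frac{t^n}{n!}c_n(z)=\exp\big(\frac z\alpha\log(1+t\alpha)-\frac{\sigma t}{\alpha}\big)$; one has $\|c_n\|^2_{L^2(\alpha\mathbb N_0,\pi_{\alpha,\sigma})}=n!\sigma^n$ and polynomials are dense in $L^2(\alpha\mathbb N_0,\pi_{\alpha,\sigma})$. For $z\in\mathbb C$, the coherent state is $\mathcal E(x,z)=\sum_{n\ge0}\frac{z^n}{n!\sigma^n}c_n(x)$ for $x\in\alpha\mathbb N_0$; explicitly $\mathcal E(\alpha n,z)=(1+\alpha z/\sigma)^n\exp(-z/\alpha)$.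 *)

theory Defs
  imports "HOL-Analysis.Analysis" "HOL-Computational_Algebra.Polynomial"
begin

text \<open>Poisson-type weight of the point alpha*n under pi_{alpha,sigma}.\<close>
definition pw :: "real \<Rightarrow> real \<Rightarrow> nat \<Rightarrow> real" where
  "pw \<alpha> \<sigma> n = exp (- \<sigma> / \<alpha>\<^sup>2) * (\<sigma> / \<alpha>\<^sup>2) ^ n / fact n"

text \<open>A function on alpha*N_0 is represented by f :: nat => complex, f n being its value at alpha*n.
  Since all weights are positive, L^2-classes coincide with such functions.\<close>
definition in_L2 :: "real \<Rightarrow> real \<Rightarrow> (nat \<Rightarrow> complex) \<Rightarrow> bool" where
  "in_L2 \<alpha> \<sigma> f \<longleftrightarrow> summable (\<lambda>n. pw \<alpha> \<sigma> n * (cmod (f n))\<^sup>2)"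

definition L2_dist2 :: "real \<Rightarrow> real \<Rightarrow> (nat \<Rightarrow> complex) \<Rightarrow> (nat \<Rightarrow> complex) \<Rightarrow> real" where
  "L2_dist2 \<alpha> \<sigma> f g = (\<Sum>n. pw \<alpha> \<sigma> n * (cmod (f n - g n))\<^sup>2)"

definition L2_conv :: "real \<Rightarrow> real \<Rightarrow> (nat \<Rightarrow> nat \<Rightarrow> complex) \<Rightarrow> (nat \<Rightarrow> complex) \<Rightarrow> bool" where
  "L2_conv \<alpha> \<sigma> F f \<longleftrightarrow> in_L2 \<alpha> \<sigma> f \<and> (\<forall>k. in_L2 \<alpha> \<sigma> (F k)) \<and>
      ((\<lambda>k. L2_dist2 \<alpha> \<sigma> (F k) f) \<longlonglongrightarrow> 0)"

definition restr :: "real \<Rightarrow> complex poly \<Rightarrow> nat \<Rightarrow> complex" where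
  "restr \<alpha> p n = poly p (of_real (\<alpha> * real n))"

text \<open>The orthogonal polynomials c_n (Charlier type), i.e. the coefficients of t^n/n! in
  exp((z/alpha) log(1+t alpha) - sigma t/alpha) = (1+t alpha)^(z/alpha) exp(-sigma t/alpha):
  c_n(z) = sum_k binom(n,k) (-sigma/alpha)^(n-k) prod_{j<k} (z - j alpha).\<close>
definition cpoly :: "real \<Rightarrow> real \<Rightarrow> nat \<Rightarrow> complex poly" where
  "cpoly \<alpha> \<sigma> n = (\<Sum>k\<le>n. smult (of_nat (n choose k) * (of_real (- \<sigma> / \<alpha>)) ^ (n - k))
       (\<Prod>j<k. [: - of_real (real j * \<alpha>), 1 :]))"

definition coh :: "real \<Rightarrow> real \<Rightarrow> complex \<Rightarrow> nat \<Rightarrow> complex" where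
  "coh \<alpha> \<sigma> z k = (\<Sum>n. z ^ n / (of_real (fact n * \<sigma> ^ n)) * restr \<alpha> (cpoly \<alpha> \<sigma> n) k)"

definition closable_poly_op :: "real \<Rightarrow> real \<Rightarrow> (complex poly \<Rightarrow> complex poly) \<Rightarrow> bool" where
  "closable_poly_op \<alpha> \<sigma> D \<longleftrightarrow>
     (\<forall>P g. L2_conv \<alpha> \<sigma> (\<lambda>k. restr \<alpha> (P k)) (\<lambda>_. 0) \<and>
            L2_conv \<alpha> \<sigma> (\<lambda>k. restr \<alpha> (D (P k))) g \<longrightarrow> g = (\<lambda>_. 0))"

text \<open>(f, g) lies in the closure of the graph of D: f is in the domain of the closure of D
  and (closure D) f = g.\<close>
definition closure_graph :: "real \<Rightarrow> real \<Rightarrow> (complex poly \<Rightarrow> complex poly) \<Rightarrow>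
    (nat \<Rightarrow> complex) \<Rightarrow> (nat \<Rightarrow> complex) \<Rightarrow> bool" where
  "closure_graph \<alpha> \<sigma> D f g \<longleftrightarrow>
     (\<exists>P. L2_conv \<alpha> \<sigma> (\<lambda>k. restr \<alpha> (P k)) f \<and> L2_conv \<alpha> \<sigma> (\<lambda>k. restr \<alpha> (D (P k))) g)"

end

theory Submission
  imports Defs
begin

(* The c_n expand in the falling factorials x (x - alpha) ... (x - (k-1) alpha), which the
   forward difference quotient (p(x + alpha) - p(x)) / alpha lowers by one index; hence
   D c_n = n c_(n-1) forces D to be this difference quotient, the monic c_n being a basis.
   Since all weights are positive, L^2-convergence implies pointwise convergence on alpha*N_0,
   and the difference quotient of a pointwise null sequence is null: D is closable.
   At x = alpha*m the k-th falling factorial is alpha^k k! (m choose k), so the coherent state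
   is exp(-z/alpha) (1 + alpha z/sigma)^m, and its Newton interpolants at 0, alpha, ..., K alpha
   are truncated binomial expansions. They agree with it, and sigma D of them with z times it,
   on an initial segment growing with K, and they are dominated by a geometric sequence, which
   is square-summable against the Poisson weights. *)

lemma smult_sum_right: "smult a (\<Sum>i\<in>A. p i) = (\<Sum>i\<in>A. smult a (p i))"
  by (induction A rule: infinite_finite_induct) (simp_all add: smult_add_right)

definition fwd_diff :: "'a::field \<Rightarrow> 'a poly \<Rightarrow> 'a poly" where
  "fwd_diff h p = smult (inverse h) (p \<circ>\<^sub>p [:h, 1:] - p)"

lemma poly_fwd_diff: "poly (fwd_diff h p) x = (poly p (x + h) - poly p x) / h"
  by (simp add: fwd_diff_def poly_pcompose divide_inverse add.commute)

lemma fwd_diff_0 [simp]: "fwd_diff h 0 = 0"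
  by (simp add: fwd_diff_def)

lemma fwd_diff_add: "fwd_diff h (p + q) = fwd_diff h p + fwd_diff h q"
  unfolding fwd_diff_def pcompose_add smult_add_right[symmetric] by (simp add: algebra_simps)

lemma fwd_diff_smult: "fwd_diff h (smult a p) = smult a (fwd_diff h p)"
  by (simp add: fwd_diff_def pcompose_smult smult_diff_right mult.commute)

lemma fwd_diff_sum: "fwd_diff h (\<Sum>i\<in>A. p i) = (\<Sum>i\<in>A. fwd_diff h (p i))"
  by (induction A rule: infinite_finite_induct) (simp_all add: fwd_diff_add)

lemma restr_fwd_diff:
  "restr \<alpha> (fwd_diff (of_real \<alpha>) p) m = (restr \<alpha> p (Suc m) - restr \<alpha> p m) / of_real \<alpha>"
  by (simp add: restr_def poly_fwd_diff algebra_simps)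

lemma linear_poly_maps_eqI:
  fixes D E :: "'a::field poly \<Rightarrow> 'a poly" and b :: "nat \<Rightarrow> 'a poly"
  assumes D_add: "\<And>p q. D (p + q) = D p + D q" and D_smult: "\<And>a p. D (smult a p) = smult a (D p)"
    and E_add: "\<And>p q. E (p + q) = E p + E q" and E_smult: "\<And>a p. E (smult a p) = smult a (E p)"
    and degree_b: "\<And>n. degree (b n) = n" and b_nonzero: "\<And>n. b n \<noteq> 0"
    and D_E_b: "\<And>n. D (b n) = E (b n)"
  shows "D p = E p"
proof -
  have D_E_0: "D 0 = E 0"
    using D_smult[of 0 0] E_smult[of 0 0] by simp
  have "D p = E p" if "degree p \<le> N" for N p
    using that
  proof (induction N arbitrary: p rule: less_induct)
    case (less N p)
    define c where "c = coeff p N / lead_coeff (b N)"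
    define q where "q = p - smult c (b N)"
    have coeff_q: "coeff q i = 0" if "N \<le> i" for i
    proof (cases "i = N")
      case True
      then show ?thesis
        using b_nonzero[of N] degree_b[of N] leading_coeff_0_iff[of "b N"] by (simp add: q_def c_def)
    next
      case False
      then show ?thesis using that less.prems degree_b[of N] by (simp add: q_def coeff_eq_0)
    qed
    have "D q = E q"
    proof (cases N)
      case 0
      then have "q = 0" using coeff_q by (intro poly_eqI) simp
      then show ?thesis using D_E_0 by simp
    next
      case (Suc M)
      then have "degree q \<le> M" using coeff_q by (intro degree_le) simp
      then show ?thesis using Suc by (intro less.IH) simp_all
    qed
    moreover have "p = q + smult c (b N)" by (simp add: q_def)
    ultimately show "D p = E p"
      by (metis D_add D_smult E_add E_smult D_E_b)
  qed
  then show ?thesis by blast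
qed

definition falling_poly :: "real \<Rightarrow> nat \<Rightarrow> complex poly" where
  "falling_poly \<alpha> k = (\<Prod>j<k. [:- of_real (real j * \<alpha>), 1:])"

lemma degree_falling_poly [simp]: "degree (falling_poly \<alpha> k) = k"
  unfolding falling_poly_def by (subst degree_prod_sum_eq) auto

lemma coeff_falling_poly_self [simp]: "coeff (falling_poly \<alpha> k) k = 1"
proof -
  have "lead_coeff (falling_poly \<alpha> k) = 1"
    unfolding falling_poly_def by (simp add: lead_coeff_prod)
  then show ?thesis by simp
qed

lemma poly_falling_poly_lattice:
  "poly (falling_poly \<alpha> k) (of_real (\<alpha> * real m)) = of_real \<alpha> ^ k * fact k * of_nat (m choose k)"
proof -
  have "poly (falling_poly \<alpha> k) (of_real (\<alpha> * real m)) = (\<Prod>j<k. of_real \<alpha> * (of_nat m - of_nat j))"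
    by (simp add: falling_poly_def poly_prod algebra_simps)
  also have "\<dots> = of_real \<alpha> ^ k * (\<Prod>j<k. of_nat m - of_nat j)"
    by (simp add: prod.distrib)
  also have "(\<Prod>j<k. of_nat m - of_nat j :: complex) = fact k * of_nat (m choose k)"
    by (simp add: binomial_gbinomial gbinomial_prod_rev atLeast0LessThan)
  finally show ?thesis by (simp add: mult.assoc)
qed

lemma poly_falling_poly_Suc_diff:
  "poly (falling_poly \<alpha> (Suc k)) (x + of_real \<alpha>) - poly (falling_poly \<alpha> (Suc k)) x
     = of_nat (Suc k) * of_real \<alpha> * poly (falling_poly \<alpha> k) x"
proof -
  let ?P = "poly (falling_poly \<alpha> k) x"
  have "poly (falling_poly \<alpha> (Suc k)) (x + of_real \<alpha>)
      = (x + of_real \<alpha>) * (\<Prod>j<k. x + of_real \<alpha> - of_real (real (Suc j) * \<alpha>))"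
    unfolding falling_poly_def poly_prod by (subst prod.lessThan_Suc_shift) simp
  also have "(\<Prod>j<k. x + of_real \<alpha> - of_real (real (Suc j) * \<alpha>)) = ?P"
    unfolding falling_poly_def poly_prod by (intro prod.cong) (auto simp: algebra_simps)
  finally have "poly (falling_poly \<alpha> (Suc k)) (x + of_real \<alpha>) = (x + of_real \<alpha>) * ?P" .
  moreover have "poly (falling_poly \<alpha> (Suc k)) x = ?P * (x - of_real (real k * \<alpha>))"
    by (simp add: falling_poly_def poly_prod algebra_simps)
  ultimately show ?thesis
    by (simp add: algebra_simps)
qed

lemma fwd_diff_falling_poly:
  assumes "\<alpha> \<noteq> 0"
  shows "fwd_diff (of_real \<alpha>) (falling_poly \<alpha> k) = smult (of_nat k) (falling_poly \<alpha> (k - 1))"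
proof (cases k)
  case 0
  then show ?thesis by (simp add: fwd_diff_def falling_poly_def pcompose_1)
next
  case (Suc j)
  have "poly (fwd_diff (of_real \<alpha>) (falling_poly \<alpha> k)) x = poly (smult (of_nat k) (falling_poly \<alpha> (k - 1))) x" for x
    using assms by (simp add: Suc poly_fwd_diff poly_falling_poly_Suc_diff del: of_nat_Suc)
  then have "poly (fwd_diff (of_real \<alpha>) (falling_poly \<alpha> k)) = poly (smult (of_nat k) (falling_poly \<alpha> (k - 1)))"
    by (rule ext)
  then show ?thesis by (simp only: poly_eq_poly_eq_iff)
qed

lemma cpoly_eq_sum_falling_poly:
  "cpoly \<alpha> \<sigma> n = (\<Sum>k\<le>n. smult (of_nat (n choose k) * of_real (- \<sigma> / \<alpha>) ^ (n - k)) (falling_poly \<alpha> k))"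
  by (simp add: cpoly_def falling_poly_def)

lemma coeff_cpoly_high:
  assumes "n \<le> i"
  shows "coeff (cpoly \<alpha> \<sigma> n) i = coeff (falling_poly \<alpha> n) i"
proof -
  have "coeff (falling_poly \<alpha> k) i = 0" if "k < n" for k
    using that assms by (intro coeff_eq_0) simp
  then show ?thesis
    by (simp add: cpoly_eq_sum_falling_poly coeff_sum lessThan_Suc_atMost[symmetric])
qed

lemma coeff_cpoly_self [simp]: "coeff (cpoly \<alpha> \<sigma> n) n = 1"
  by (simp add: coeff_cpoly_high)

lemma degree_cpoly [simp]: "degree (cpoly \<alpha> \<sigma> n) = n"
  by (intro antisym degree_le allI impI le_degree) (simp_all add: coeff_cpoly_high coeff_eq_0)

lemma fwd_diff_cpoly:
  assumes "\<alpha> \<noteq> 0"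
  shows "fwd_diff (of_real \<alpha>) (cpoly \<alpha> \<sigma> n) = smult (of_nat n) (cpoly \<alpha> \<sigma> (n - 1))"
proof (cases n)
  case 0
  then show ?thesis by (simp add: cpoly_def fwd_diff_def pcompose_1)
next
  case (Suc m)
  let ?a = "of_real (- \<sigma> / \<alpha>) :: complex"
  have "fwd_diff (of_real \<alpha>) (cpoly \<alpha> \<sigma> n)
      = (\<Sum>k\<le>Suc m. smult (of_nat (Suc m choose k) * ?a ^ (Suc m - k) * of_nat k) (falling_poly \<alpha> (k - 1)))"
    unfolding Suc cpoly_eq_sum_falling_poly fwd_diff_sum fwd_diff_smult fwd_diff_falling_poly[OF assms]
    by (simp only: smult_smult)
  also have "\<dots> = (\<Sum>i\<le>m. smult (of_nat (Suc m choose Suc i) * ?a ^ (m - i) * of_nat (Suc i)) (falling_poly \<alpha> i))"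
    by (subst sum.atMost_Suc_shift) simp
  also have "\<dots> = (\<Sum>i\<le>m. smult (of_nat (Suc m) * (of_nat (m choose i) * ?a ^ (m - i))) (falling_poly \<alpha> i))"
  proof (intro sum.cong refl arg_cong2[where f = smult])
    fix i
    have "(of_nat (Suc m choose Suc i) * of_nat (Suc i) :: complex) = of_nat (Suc m) * of_nat (m choose i)"
      by (metis Suc_times_binomial_eq mult.commute of_nat_mult)
    then show "of_nat (Suc m choose Suc i) * ?a ^ (m - i) * of_nat (Suc i) = of_nat (Suc m) * (of_nat (m choose i) * ?a ^ (m - i))"
      by (metis mult.assoc mult.commute)
  qed
  also have "\<dots> = smult (of_nat n) (cpoly \<alpha> \<sigma> (n - 1))"
    by (simp add: Suc cpoly_eq_sum_falling_poly smult_sum_right del: of_nat_Suc)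
  finally show ?thesis .
qed

lemma pw_nonneg: "0 \<le> \<sigma> \<Longrightarrow> 0 \<le> pw \<alpha> \<sigma> m"
  by (simp add: pw_def)

lemma pw_pos: "\<alpha> \<noteq> 0 \<Longrightarrow> 0 < \<sigma> \<Longrightarrow> 0 < pw \<alpha> \<sigma> m"
  by (simp add: pw_def)

lemma summable_pw_geometric: "summable (\<lambda>m. pw \<alpha> \<sigma> m * (C * B ^ m)\<^sup>2)"
proof -
  have "(\<lambda>m. pw \<alpha> \<sigma> m * (C * B ^ m)\<^sup>2)
      = (\<lambda>m. C\<^sup>2 * exp (- \<sigma> / \<alpha>\<^sup>2) * (inverse (fact m) * (\<sigma> / \<alpha>\<^sup>2 * B\<^sup>2) ^ m))"
    by (simp add: fun_eq_iff pw_def power_mult_distrib field_simps flip: power_mult)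
  then show ?thesis
    by (simp only: summable_mult summable_exp)
qed

lemma norm_diff_squared_le:
  fixes a b :: "'a::real_normed_vector"
  shows "(norm (a - b))\<^sup>2 \<le> 2 * (norm a)\<^sup>2 + 2 * (norm b)\<^sup>2"
proof -
  have "(norm (a - b))\<^sup>2 \<le> (norm a + norm b)\<^sup>2"
    by (intro power_mono norm_triangle_ineq4) simp
  also have "\<dots> \<le> 2 * (norm a)\<^sup>2 + 2 * (norm b)\<^sup>2"
    using zero_le_power2[of "norm a - norm b"] unfolding power2_diff power2_sum by linarith
  finally show ?thesis .
qed

lemma summable_pw_norm_diff:
  assumes "0 \<le> \<sigma>" "in_L2 \<alpha> \<sigma> f" "in_L2 \<alpha> \<sigma> g"
  shows "summable (\<lambda>m. pw \<alpha> \<sigma> m * (cmod (f m - g m))\<^sup>2)"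
proof (rule summable_comparison_test'[where N = 0])
  show "summable (\<lambda>m. 2 * (pw \<alpha> \<sigma> m * (cmod (f m))\<^sup>2) + 2 * (pw \<alpha> \<sigma> m * (cmod (g m))\<^sup>2))"
    using assms(2,3) unfolding in_L2_def by (intro summable_add summable_mult)
  fix m
  have "pw \<alpha> \<sigma> m * (cmod (f m - g m))\<^sup>2 \<le> pw \<alpha> \<sigma> m * (2 * (cmod (f m))\<^sup>2 + 2 * (cmod (g m))\<^sup>2)"
    by (intro mult_left_mono norm_diff_squared_le pw_nonneg assms(1))
  then show "norm (pw \<alpha> \<sigma> m * (cmod (f m - g m))\<^sup>2)
      \<le> 2 * (pw \<alpha> \<sigma> m * (cmod (f m))\<^sup>2) + 2 * (pw \<alpha> \<sigma> m * (cmod (g m))\<^sup>2)"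
    using pw_nonneg[OF assms(1), of \<alpha> m] by (simp add: algebra_simps)
qed

lemma L2_conv_imp_pointwise:
  assumes "\<alpha> \<noteq> 0" "0 < \<sigma>" "L2_conv \<alpha> \<sigma> F f"
  shows "(\<lambda>k. F k m) \<longlonglongrightarrow> f m"
proof -
  define d where "d = (\<lambda>k. sqrt (L2_dist2 \<alpha> \<sigma> (F k) f / pw \<alpha> \<sigma> m))"
  have pw_m: "0 < pw \<alpha> \<sigma> m" using assms(1,2) by (rule pw_pos)
  have d_ge: "norm (F k m - f m) \<le> d k" for k
  proof -
    have "summable (\<lambda>n. pw \<alpha> \<sigma> n * (cmod (F k n - f n))\<^sup>2)"
      using assms unfolding L2_conv_def by (intro summable_pw_norm_diff) auto
    from sum_le_suminf[OF this, of "{m}"]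
    have "pw \<alpha> \<sigma> m * (cmod (F k m - f m))\<^sup>2 \<le> L2_dist2 \<alpha> \<sigma> (F k) f"
      unfolding L2_dist2_def using pw_nonneg assms(2) by simp
    then show ?thesis
      unfolding d_def using pw_m by (intro real_le_rsqrt) (simp add: pos_le_divide_eq mult.commute)
  qed
  have "(\<lambda>k. L2_dist2 \<alpha> \<sigma> (F k) f) \<longlonglongrightarrow> 0"
    using assms(3) by (simp add: L2_conv_def)
  from tendsto_real_sqrt[OF tendsto_divide_zero[OF this, of "pw \<alpha> \<sigma> m"]]
  have d_lim: "d \<longlonglongrightarrow> 0"
    by (simp add: d_def)
  have "(\<lambda>k. F k m - f m) \<longlonglongrightarrow> 0"
    by (rule Lim_null_comparison[where g = d]) (simp_all add: d_ge d_lim)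
  then show ?thesis by (rule LIM_zero_cancel)
qed

lemma in_L2_dominated:
  assumes "0 \<le> \<sigma>" "summable (\<lambda>m. pw \<alpha> \<sigma> m * (g m)\<^sup>2)" "\<And>m. cmod (u m) \<le> g m"
  shows "in_L2 \<alpha> \<sigma> u"
  unfolding in_L2_def
proof (rule summable_comparison_test'[OF assms(2), where N = 0])
  fix m
  have "(cmod (u m))\<^sup>2 \<le> (g m)\<^sup>2" by (intro power_mono assms(3)) simp
  then show "norm (pw \<alpha> \<sigma> m * (cmod (u m))\<^sup>2) \<le> pw \<alpha> \<sigma> m * (g m)\<^sup>2"
    using pw_nonneg[OF assms(1)] by (simp add: mult_left_mono)
qed

lemma suminf_tail_tendsto_0:
  fixes f :: "nat \<Rightarrow> 'a::real_normed_vector"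
  assumes "summable f"
  shows "(\<lambda>K. \<Sum>m. f (m + K)) \<longlonglongrightarrow> 0"
  using tendsto_diff[OF tendsto_const[of "suminf f"] summable_LIMSEQ[OF assms]]
  by (simp add: suminf_minus_initial_segment[OF assms])

lemma L2_dist2_le_tail:
  assumes "0 \<le> \<sigma>" and g_L2: "summable (\<lambda>m. pw \<alpha> \<sigma> m * (g m)\<^sup>2)"
    and u_le: "\<And>m. cmod (u m) \<le> g m" and v_le: "\<And>m. cmod (v m) \<le> g m"
    and u_eq_v: "\<And>m. m < K \<Longrightarrow> u m = v m"
  shows "L2_dist2 \<alpha> \<sigma> u v \<le> 4 * (\<Sum>m. pw \<alpha> \<sigma> (m + K) * (g (m + K))\<^sup>2)"
proof -
  define t where "t m = pw \<alpha> \<sigma> m * (cmod (u m - v m))\<^sup>2" for m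
  have t_summable: "summable t"
    unfolding t_def using assms(1) by (intro summable_pw_norm_diff in_L2_dominated[OF _ g_L2] u_le v_le)
  have t_le: "t m \<le> 4 * (pw \<alpha> \<sigma> m * (g m)\<^sup>2)" for m
  proof -
    have "cmod (u m - v m) \<le> 2 * g m"
      using norm_triangle_ineq4[of "u m" "v m"] u_le[of m] v_le[of m] by linarith
    then have "(cmod (u m - v m))\<^sup>2 \<le> (2 * g m)\<^sup>2" by (intro power_mono) auto
    from mult_left_mono[OF this pw_nonneg[OF assms(1)]] show ?thesis
      unfolding t_def by (simp add: power_mult_distrib algebra_simps)
  qed
  have "(\<Sum>i<K. t i) = 0"
    by (simp add: t_def u_eq_v)
  then have "L2_dist2 \<alpha> \<sigma> u v = (\<Sum>m. t (m + K))"
    using suminf_split_initial_segment[OF t_summable, of K] unfolding L2_dist2_def t_def by simp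
  also have "\<dots> \<le> (\<Sum>m. 4 * (pw \<alpha> \<sigma> (m + K) * (g (m + K))\<^sup>2))"
    using t_le t_summable g_L2 by (intro suminf_le summable_ignore_initial_segment summable_mult)
  also have "\<dots> = 4 * (\<Sum>m. pw \<alpha> \<sigma> (m + K) * (g (m + K))\<^sup>2)"
    using g_L2 by (intro suminf_mult summable_ignore_initial_segment)
  finally show ?thesis .
qed

lemma L2_convI_dominated:
  fixes F :: "nat \<Rightarrow> nat \<Rightarrow> complex" and g :: "nat \<Rightarrow> real"
  assumes "0 \<le> \<sigma>"
    and g_L2: "summable (\<lambda>m. pw \<alpha> \<sigma> m * (g m)\<^sup>2)"
    and F_le: "\<And>K m. cmod (F K m) \<le> g m"
    and F_eq: "\<And>K m. m < K \<Longrightarrow> F K m = f m"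
  shows "L2_conv \<alpha> \<sigma> F f"
proof -
  have f_le: "cmod (f m) \<le> g m" for m
    using F_le[of "Suc m" m] F_eq[of m "Suc m"] by simp
  have f_L2: "in_L2 \<alpha> \<sigma> f" and F_L2: "in_L2 \<alpha> \<sigma> (F K)" for K
    using assms(1) g_L2 f_le F_le by (auto intro: in_L2_dominated)
  have dist_nonneg: "0 \<le> L2_dist2 \<alpha> \<sigma> (F K) f" for K
    unfolding L2_dist2_def using pw_nonneg[OF assms(1)]
    by (intro suminf_nonneg summable_pw_norm_diff assms(1) F_L2 f_L2) auto
  have dist_le: "L2_dist2 \<alpha> \<sigma> (F K) f \<le> 4 * (\<Sum>m. pw \<alpha> \<sigma> (m + K) * (g (m + K))\<^sup>2)" for K
    using assms(1) g_L2 F_le f_le F_eq by (rule L2_dist2_le_tail)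
  have "(\<lambda>K. 4 * (\<Sum>m. pw \<alpha> \<sigma> (m + K) * (g (m + K))\<^sup>2)) \<longlonglongrightarrow> 0"
    using suminf_tail_tendsto_0[OF g_L2] by (rule tendsto_mult_right_zero)
  then have "(\<lambda>K. L2_dist2 \<alpha> \<sigma> (F K) f) \<longlonglongrightarrow> 0"
    by (rule tendsto_sandwich[OF always_eventually always_eventually tendsto_const, rotated 2])
      (simp_all add: dist_nonneg dist_le)
  then show ?thesis
    unfolding L2_conv_def using f_L2 F_L2 by blast
qed

lemma closable_fwd_diff:
  assumes "\<alpha> \<noteq> 0" "0 < \<sigma>"
  shows "closable_poly_op \<alpha> \<sigma> (fwd_diff (of_real \<alpha>))"
  unfolding closable_poly_op_def
proof (intro allI impI ext, elim conjE)
  fix P g m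
  assume P_lim: "L2_conv \<alpha> \<sigma> (\<lambda>k. restr \<alpha> (P k)) (\<lambda>_. 0)"
    and DP_lim: "L2_conv \<alpha> \<sigma> (\<lambda>k. restr \<alpha> (fwd_diff (of_real \<alpha>) (P k))) g"
  have "(\<lambda>k. restr \<alpha> (fwd_diff (of_real \<alpha>) (P k)) m) \<longlonglongrightarrow> g m"
    using assms DP_lim by (rule L2_conv_imp_pointwise)
  moreover have "(\<lambda>k. restr \<alpha> (P k) (Suc m) - restr \<alpha> (P k) m) \<longlonglongrightarrow> 0"
    using tendsto_diff[OF L2_conv_imp_pointwise[OF assms P_lim] L2_conv_imp_pointwise[OF assms P_lim]]
    by simp
  then have "(\<lambda>k. (restr \<alpha> (P k) (Suc m) - restr \<alpha> (P k) m) / of_real \<alpha>) \<longlonglongrightarrow> 0"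
    by (rule tendsto_divide_zero)
  ultimately show "g m = 0"
    by (simp add: restr_fwd_diff LIMSEQ_unique)
qed

lemma sum_binomial_truncated:
  fixes c :: "'a::comm_semiring_1"
  assumes "m \<le> K"
  shows "(\<Sum>k\<le>K. of_nat (m choose k) * c ^ k) = (1 + c) ^ m"
proof -
  have "(\<Sum>k\<le>K. of_nat (m choose k) * c ^ k) = (\<Sum>k\<le>m. of_nat (m choose k) * c ^ k)"
    using assms by (intro sum.mono_neutral_right) (auto simp: binomial_eq_0)
  also have "\<dots> = (1 + c) ^ m"
    using binomial_ring[of c 1 m] by (simp add: add.commute)
  finally show ?thesis .
qed

lemma norm_sum_binomial_truncated_le:
  fixes c :: "'a::real_normed_field"
  shows "norm (\<Sum>k\<le>K. of_nat (m choose k) * c ^ k) \<le> (1 + norm c) ^ m"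
proof -
  have "norm (\<Sum>k\<le>K. of_nat (m choose k) * c ^ k) \<le> (\<Sum>k\<le>K. of_nat (m choose k) * norm c ^ k)"
    by (rule order_trans[OF norm_sum]) (simp add: norm_mult norm_power)
  also have "\<dots> \<le> (\<Sum>k\<le>max K m. of_nat (m choose k) * norm c ^ k)"
    by (intro sum_mono2) auto
  also have "\<dots> = (1 + norm c) ^ m"
    by (rule sum_binomial_truncated) simp
  finally show ?thesis .
qed

lemma coh_eq:
  assumes "\<alpha> \<noteq> 0" "\<sigma> \<noteq> 0"
  shows "coh \<alpha> \<sigma> z m = exp (- z / of_real \<alpha>) * (1 + of_real \<alpha> * z / of_real \<sigma>) ^ m"
proof -
  define w where "w = z / of_real \<sigma>"
  define a :: complex where "a = of_real (- \<sigma> / \<alpha>)"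
  define A where "A j = (w * a) ^ j /\<^sub>R fact j" for j
  define B where "B k = of_nat (m choose k) * (of_real \<alpha> * w) ^ k" for k
  have "z ^ n / of_real (fact n * \<sigma> ^ n) * restr \<alpha> (cpoly \<alpha> \<sigma> n) m = (\<Sum>k\<le>n. B k * A (n - k))" for n
  proof -
    have "z ^ n / of_real (fact n * \<sigma> ^ n) * restr \<alpha> (cpoly \<alpha> \<sigma> n) m
        = (\<Sum>k\<le>n. w ^ n / fact n * (of_nat (n choose k) * a ^ (n - k) * (of_real \<alpha> ^ k * fact k * of_nat (m choose k))))"
      unfolding restr_def cpoly_eq_sum_falling_poly poly_sum poly_smult poly_falling_poly_lattice sum_distrib_left
      by (simp add: w_def a_def power_divide mult.commute)
    also have "\<dots> = (\<Sum>k\<le>n. B k * A (n - k))"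
    proof (intro sum.cong refl)
      fix k assume "k \<in> {..n}"
      then have "k \<le> n" by simp
      then have "of_nat (n choose k) = (fact n / (fact k * fact (n - k)) :: complex)"
        and "w ^ n = w ^ k * w ^ (n - k)"
        by (simp_all add: binomial_fact flip: power_add)
      then show "w ^ n / fact n * (of_nat (n choose k) * a ^ (n - k) * (of_real \<alpha> ^ k * fact k * of_nat (m choose k)))
          = B k * A (n - k)"
        unfolding A_def B_def by (simp add: field_simps power_mult_distrib scaleR_conv_of_real)
    qed
    finally show ?thesis .
  qed
  moreover have "(\<lambda>n. \<Sum>k\<le>n. B k * A (n - k)) sums (suminf B * suminf A)"
  proof (rule Cauchy_product_sums)
    show "summable (\<lambda>k. norm (B k))"
      by (rule summable_finite[of "{..m}"]) (auto simp: B_def binomial_eq_0)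
    show "summable (\<lambda>j. norm (A j))"
      unfolding A_def by (rule summable_norm_exp)
  qed
  moreover have "suminf B = (1 + of_real \<alpha> * z / of_real \<sigma>) ^ m"
  proof -
    have "B sums (\<Sum>k\<le>m. B k)"
      by (rule sums_finite) (auto simp: B_def binomial_eq_0)
    then show ?thesis
      unfolding B_def w_def by (simp add: sums_iff sum_binomial_truncated)
  qed
  moreover have "suminf A = exp (- z / of_real \<alpha>)"
  proof -
    have "w * a = - z / of_real \<alpha>"
      using assms by (simp add: w_def a_def)
    then show ?thesis
      unfolding A_def using exp_converges sums_unique by metis
  qed
  ultimately show ?thesis
    unfolding coh_def by (simp add: sums_iff mult.commute)
qed

(* Newton interpolation of the coherent state at the nodes 0, alpha, ..., K alpha. *)
definition coh_newton :: "real \<Rightarrow> real \<Rightarrow> complex \<Rightarrow> nat \<Rightarrow> complex poly" where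
  "coh_newton \<alpha> \<sigma> z K =
     smult (exp (- z / of_real \<alpha>)) (\<Sum>k\<le>K. smult ((z / of_real \<sigma>) ^ k / fact k) (falling_poly \<alpha> k))"

lemma restr_coh_newton:
  "restr \<alpha> (coh_newton \<alpha> \<sigma> z K) m
     = exp (- z / of_real \<alpha>) * (\<Sum>k\<le>K. of_nat (m choose k) * (of_real \<alpha> * z / of_real \<sigma>) ^ k)"
  unfolding restr_def coh_newton_def poly_smult poly_sum poly_falling_poly_lattice
  by (simp add: power_mult_distrib power_divide mult_ac)

lemma L2_conv_coh_newton:
  assumes "\<alpha> \<noteq> 0" "0 < \<sigma>"
  shows "L2_conv \<alpha> \<sigma> (\<lambda>K. restr \<alpha> (coh_newton \<alpha> \<sigma> z K)) (coh \<alpha> \<sigma> z)"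
proof (rule L2_convI_dominated)
  let ?e = "exp (- z / of_real \<alpha>)" and ?c = "of_real \<alpha> * z / of_real \<sigma>"
  show "summable (\<lambda>m. pw \<alpha> \<sigma> m * (cmod ?e * (1 + cmod ?c) ^ m)\<^sup>2)"
    by (rule summable_pw_geometric)
  show "cmod (restr \<alpha> (coh_newton \<alpha> \<sigma> z K) m) \<le> cmod ?e * (1 + cmod ?c) ^ m" for K m
    unfolding restr_coh_newton norm_mult by (intro mult_left_mono norm_sum_binomial_truncated_le) simp
  show "restr \<alpha> (coh_newton \<alpha> \<sigma> z K) m = coh \<alpha> \<sigma> z m" if "m < K" for K m
    using that assms by (simp add: restr_coh_newton sum_binomial_truncated coh_eq)
qed (use assms in simp)

lemma L2_conv_fwd_diff_coh_newton:
  assumes "\<alpha> \<noteq> 0" "0 < \<sigma>"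
  shows "L2_conv \<alpha> \<sigma> (\<lambda>K. restr \<alpha> (smult (of_real \<sigma>) (fwd_diff (of_real \<alpha>) (coh_newton \<alpha> \<sigma> z K))))
    (\<lambda>m. z * coh \<alpha> \<sigma> z m)"
proof (rule L2_convI_dominated)
  let ?e = "exp (- z / of_real \<alpha>)" and ?c = "of_real \<alpha> * z / of_real \<sigma>"
  let ?F = "\<lambda>K m. restr \<alpha> (coh_newton \<alpha> \<sigma> z K) m"
  let ?C = "\<sigma> / \<bar>\<alpha>\<bar> * cmod ?e * (2 + cmod ?c)"
  have restr_D: "restr \<alpha> (smult (of_real \<sigma>) (fwd_diff (of_real \<alpha>) (coh_newton \<alpha> \<sigma> z K))) m
      = of_real \<sigma> / of_real \<alpha> * (?F K (Suc m) - ?F K m)" for K m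
    using restr_fwd_diff[of \<alpha> "coh_newton \<alpha> \<sigma> z K" m] by (simp add: restr_def)
  show "summable (\<lambda>m. pw \<alpha> \<sigma> m * (?C * (1 + cmod ?c) ^ m)\<^sup>2)"
    by (rule summable_pw_geometric)
  show "cmod (restr \<alpha> (smult (of_real \<sigma>) (fwd_diff (of_real \<alpha>) (coh_newton \<alpha> \<sigma> z K))) m)
      \<le> ?C * (1 + cmod ?c) ^ m" for K m
  proof -
    have F_le: "cmod (?F K i) \<le> cmod ?e * (1 + cmod ?c) ^ i" for i
      unfolding restr_coh_newton norm_mult by (intro mult_left_mono norm_sum_binomial_truncated_le) simp
    have "cmod (?F K (Suc m) - ?F K m) \<le> cmod ?e * (1 + cmod ?c) ^ Suc m + cmod ?e * (1 + cmod ?c) ^ m"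
      using norm_triangle_ineq4[of "?F K (Suc m)" "?F K m"] F_le[of "Suc m"] F_le[of m] by linarith
    then have "\<sigma> / \<bar>\<alpha>\<bar> * cmod (?F K (Suc m) - ?F K m)
        \<le> \<sigma> / \<bar>\<alpha>\<bar> * (cmod ?e * (1 + cmod ?c) ^ Suc m + cmod ?e * (1 + cmod ?c) ^ m)"
      using assms by (intro mult_left_mono) auto
    also have "\<dots> = ?C * (1 + cmod ?c) ^ m"
      by (simp add: algebra_simps)
    finally show ?thesis
      using assms unfolding restr_D by (simp add: norm_mult norm_divide)
  qed
  show "restr \<alpha> (smult (of_real \<sigma>) (fwd_diff (of_real \<alpha>) (coh_newton \<alpha> \<sigma> z K))) m = z * coh \<alpha> \<sigma> z m"
    if "m < K" for K m
  proof -
    have "restr \<alpha> (smult (of_real \<sigma>) (fwd_diff (of_real \<alpha>) (coh_newton \<alpha> \<sigma> z K))) m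
        = of_real \<sigma> / of_real \<alpha> * (?e * (1 + ?c) ^ Suc m - ?e * (1 + ?c) ^ m)"
      using that unfolding restr_D restr_coh_newton by (simp add: sum_binomial_truncated)
    also have "\<dots> = z * (?e * (1 + ?c) ^ m)"
      using assms by (simp add: field_simps)
    finally show ?thesis
      using assms by (simp add: coh_eq)
  qed
qed (use assms in simp)

theorem proposition4p7:
  fixes \<alpha> \<sigma> :: real and D :: "complex poly \<Rightarrow> complex poly"
  assumes "\<alpha> > 0" and "\<sigma> > 0"
    and "\<And>p q. D (p + q) = D p + D q"
    and "\<And>a p. D (smult a p) = smult a (D p)"
    and "\<And>n. D (cpoly \<alpha> \<sigma> n) = smult (of_nat n) (cpoly \<alpha> \<sigma> (n - 1))"
  shows "closable_poly_op \<alpha> \<sigma> D \<and>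
    (\<forall>z. closure_graph \<alpha> \<sigma> (\<lambda>p. smult (of_real \<sigma>) (D p)) (coh \<alpha> \<sigma> z) (\<lambda>k. z * coh \<alpha> \<sigma> z k))"
proof -
  have "\<alpha> \<noteq> 0" using assms(1) by simp
  have cpoly_nonzero: "cpoly \<alpha> \<sigma> n \<noteq> 0" for n
    by (metis coeff_0 coeff_cpoly_self zero_neq_one)
  have "D = fwd_diff (of_real \<alpha>)"
  proof
    fix p
    show "D p = fwd_diff (of_real \<alpha>) p"
      by (rule linear_poly_maps_eqI[where b = "cpoly \<alpha> \<sigma>"])
        (use assms(3-5) \<open>\<alpha> \<noteq> 0\<close> cpoly_nonzero in
          \<open>simp_all add: fwd_diff_add fwd_diff_smult fwd_diff_cpoly\<close>)
  qed
  then show ?thesis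
    unfolding closure_graph_def
    using closable_fwd_diff L2_conv_coh_newton L2_conv_fwd_diff_coh_newton \<open>\<alpha> \<noteq> 0\<close> assms(2) by blast
qed

end
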